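(* Let $n\ge1$. For $v,w\in\mathfrak{S}_n$ set $$\lambda(v,w)=\#\{J\subseteq[n-1]:\mathrm{Des}(w^{-1}v_J)\subseteq J,\ \#J\text{ odd}\}-\#\{J\subseteq[n-1]:\mathrm{Des}(w^{-1}v_J)\subseteq J,\ \#J\text{ even}\}.$$ Then the antipode $S$ of $\mathfrak{S}Sym$ satisfies $S(\mathcal{F}_v)=\sum_{w\in\mathfrak{S}_n}\lambda(v,w)\,\mathcal{F}_w$.
   Context: Permutations in one-line notation, product is composition $(uv)(i)=u(v(i))$. $\mathrm{Des}(x)=\{p\in[n-1]:x_p>x_{p+1}\}$. $\mathrm{st}(a_1,\ldots,a_m)\in\mathfrak{S}_m$ is the permutation with the same relative order as the distinct integers $a_i$. For $x\in\mathfrak{S}_a,y\in\mathfrak{S}_b$, $x\times y\in\mathfrak{S}_{a+b}$ has $(x\times y)(i)=x_i$ ($i\le a$), $(x\times y)(a+j)=a+y_j$. For $v\in\mathfrak{S}_n$ and $J=\{p_1<\cdots<p_k\}\subseteq[n-1]$, $v_J=\mathrm{st}(v_1,\ldots,v_{p_1})\times\mathrm{st}(v_{p_1+1},\ldots,v_{p_2})\times\cdots\times\mathrm{st}(v_{p_k+1},\ldots,v_n)$, $v_\emptyset=v$. $\mathfrak{S}Sym$ is the graded connected Hopf algebra over $\mathbb{Q}$ with basis $\{\mathcal{F}_u:u\in\mathfrak{S}_n,n\ge0\}$, product $\mathcal{F}_u\cdot\mathcal{F}_v=\sum_{\zeta}\mathcal{F}_{(u\times v)\cdot\zeta^{-1}}$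 over $\zeta\in\mathfrak{S}_{p+q}$ with $\zeta_1<\cdots<\zeta_p$, $\zeta_{p+1}<\cdots<\zeta_{p+q}$ (for $u\in\mathfrak{S}_p,v\in\mathfrak{S}_q$), and coproduct $\Delta(\mathcal{F}_u)=\sum_{p=0}^n\mathcal{F}_{\mathrm{st}(u_1..u_p)}\otimes\mathcal{F}_{\mathrm{st}(u_{p+1}..u_n)}$. *)

theory Defs
  imports Complex_Main
begin

(* Permutations of [n] in one-line notation, as lists of values 1..n *)
definition perms :: "nat \<Rightarrow> nat list set" where
  "perms n = {u. distinct u \<and> set u = {1..n}}"

definition st :: "nat list \<Rightarrow> nat list" where
  "st xs = map (\<lambda>x. card {y \<in> set xs. y \<le> x}) xs"

(* composition (a b)(i) = a(b(i)) in one-line notation *)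
definition comp_perm :: "nat list \<Rightarrow> nat list \<Rightarrow> nat list" where
  "comp_perm a b = map (\<lambda>i. a ! (i - 1)) b"

definition inv_perm :: "nat list \<Rightarrow> nat list" where
  "inv_perm w = map (\<lambda>i. Suc (LEAST j. j < length w \<and> w ! j = i)) [1..<Suc (length w)]"

definition cross :: "nat list \<Rightarrow> nat list \<Rightarrow> nat list" where
  "cross x y = x @ map (\<lambda>j. length x + j) y"

(* descent set Des(x) \<subseteq> [n-1], positions 1-based *)
definition Des :: "nat list \<Rightarrow> nat set" where
  "Des x = {p \<in> {1..<length x}. x ! (p - 1) > x ! p}"

(* the blocks (v_1..v_{p_1}), (v_{p_1+1}..v_{p_2}), ..., (v_{p_k+1}..v_n) *)
definition blocks :: "nat list \<Rightarrow> nat set \<Rightarrow> nat list list" where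
  "blocks v J = (let b = 0 # sorted_list_of_set J @ [length v] in
     map (\<lambda>i. take (b ! Suc i - b ! i) (drop (b ! i) v)) [0..<length b - 1])"

definition vJ :: "nat list \<Rightarrow> nat set \<Rightarrow> nat list" where
  "vJ v J = foldl cross [] (map st (blocks v J))"

definition lam :: "nat \<Rightarrow> nat list \<Rightarrow> nat list \<Rightarrow> int" where
  "lam n v w =
     int (card {J. J \<subseteq> {1..<n} \<and> Des (comp_perm (inv_perm w) (vJ v J)) \<subseteq> J \<and> odd (card J)})
   - int (card {J. J \<subseteq> {1..<n} \<and> Des (comp_perm (inv_perm w) (vJ v J)) \<subseteq> J \<and> even (card J)})"

(* Elements of SSym: finitely supported coefficient functions on permutations *)
type_synonym ssym = "nat list \<Rightarrow> rat"

definition basisF :: "nat list \<Rightarrow> ssym" where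
  "basisF u = (\<lambda>w. if w = u then 1 else 0)"

definition in_ssym :: "ssym \<Rightarrow> bool" where
  "in_ssym f \<longleftrightarrow> finite {w. f w \<noteq> 0} \<and> {w. f w \<noteq> 0} \<subseteq> (\<Union>n. perms n)"

definition shuffles_perm :: "nat \<Rightarrow> nat \<Rightarrow> nat list set" where
  "shuffles_perm p q = {z \<in> perms (p + q). sorted_wrt (<) (take p z) \<and> sorted_wrt (<) (drop p z)}"

(* coefficient of F_w in F_u . F_v = sum_zeta F_{(u x v) zeta^{-1}} *)
definition mulF :: "nat list \<Rightarrow> nat list \<Rightarrow> ssym" where
  "mulF u v = (\<lambda>w. of_nat (card {z \<in> shuffles_perm (length u) (length v).
                    comp_perm (cross u v) (inv_perm z) = w}))"

definition mult :: "ssym \<Rightarrow> ssym \<Rightarrow> ssym" where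
  "mult f g = (\<lambda>w. \<Sum>u\<in>{u. f u \<noteq> 0}. \<Sum>v\<in>{v. g v \<noteq> 0}. f u * g v * mulF u v w)"

(* S is given by its values on the basis (extended linearly); the antipode axioms
   m (S \<otimes> id) \<Delta> = \<eta> \<epsilon> = m (id \<otimes> S) \<Delta> evaluated on each F_u,
   with \<Delta>(F_u) = \<Sum>_p F_{st(u_1..u_p)} \<otimes> F_{st(u_{p+1}..u_n)}, unit F_[], counit \<epsilon>(F_u) = [n = 0]. *)
definition is_antipode :: "(nat list \<Rightarrow> ssym) \<Rightarrow> bool" where
  "is_antipode S \<longleftrightarrow>
     (\<forall>n. \<forall>u\<in>perms n. in_ssym (S u)) \<and>
     (\<forall>n. \<forall>u\<in>perms n.
        (\<lambda>w. \<Sum>p\<le>n. mult (S (st (take p u))) (basisF (st (drop p u))) w)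
          = (if n = 0 then basisF [] else (\<lambda>_. 0))) \<and>
     (\<forall>n. \<forall>u\<in>perms n.
        (\<lambda>w. \<Sum>p\<le>n. mult (basisF (st (take p u))) (S (st (drop p u))) w)
          = (if n = 0 then basisF [] else (\<lambda>_. 0)))"

end

theory Submission
  imports Defs
begin

(*
  The left antipode axiom m (S (x) id) Delta = eta epsilon, evaluated at F_v for n >= 1 and
  combined with S(F_[]) = F_[], gives the recursion
    S(F_v) = - F_v - sum_{0<p<n} S(F_st(v_1..v_p)) . F_st(v_p+1..v_n).
  On the basis, F_u . F_x (u in S_p) contains F_w exactly once if the values <= p occur in w in
  the order u and the values > p in the order of x shifted by p, and not at all otherwise.
  Grouping the sets J in lambda(v,w) by their maximum p, J = insert p J', the condition
  Des(w^-1 v_J) <= J says precisely that the values > p occur in w in the order of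
  st(v_p+1..v_n) shifted by p, and that Des(w'^-1 v'_J') <= J' for v' = st(v_1..v_p) and w' the
  subword of values <= p of w. Adding p to J flips the sign and J = {} contributes -[w = v], so
  lambda satisfies the same recursion, and induction on n gives the formula.
*)

declare upt_Suc [simp del]

section \<open>Positions and inverses in one-line notation\<close>

fun pos :: "nat list \<Rightarrow> nat \<Rightarrow> nat" where
  "pos [] a = 0"
| "pos (c # w) a = (if c = a then 0 else Suc (pos w a))"

lemma pos_less_length: "a \<in> set w \<Longrightarrow> pos w a < length w"
  by (induction w) auto

lemma nth_pos: "a \<in> set w \<Longrightarrow> w ! pos w a = a"
  by (induction w) auto

lemma pos_nth: "distinct w \<Longrightarrow> j < length w \<Longrightarrow> pos w (w ! j) = j"
  by (induction w arbitrary: j) (auto simp: less_Suc_eq_0_disj)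

lemma inj_on_pos: "inj_on (pos w) (set w)"
  by (metis inj_onI nth_pos)

lemma map_pos_self: "distinct w \<Longrightarrow> map (pos w) w = [0..<length w]"
  by (rule nth_equalityI) (simp_all add: pos_nth)

lemma pos_image: "distinct w \<Longrightarrow> pos w ` set w = {..<length w}"
  by (metis map_pos_self lessThan_atLeast0 set_map set_upt)

lemma perms_iff: "v \<in> perms n \<longleftrightarrow> length v = n \<and> distinct v \<and> set v = {1..n}"
  unfolding perms_def using distinct_card by fastforce

lemma perms_length: "v \<in> perms n \<Longrightarrow> length v = n"
  by (simp add: perms_iff)

lemma perms_set: "v \<in> perms n \<Longrightarrow> set v = {1..n}"
  by (simp add: perms_iff)

lemma perms_if_length_set: "length v = n \<Longrightarrow> set v = {1..n} \<Longrightarrow> v \<in> perms n"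
  by (simp add: perms_iff card_distinct)

lemma finite_perms: "finite (perms n)"
proof (rule finite_subset)
  show "perms n \<subseteq> {xs. set xs \<subseteq> {1..n} \<and> length xs = n}"
    by (auto simp: perms_iff)
qed (simp add: finite_lists_length_eq)

lemma Nil_perms: "[] \<in> perms 0"
  by (simp add: perms_iff)

lemma filter_le_perms:
  assumes "w \<in> perms n" "p \<le> n"
  shows "filter (\<lambda>a. a \<le> p) w \<in> perms p"
  using assms by (simp add: perms_def perms_iff) auto

lemma length_comp_perm [simp]: "length (comp_perm a b) = length b"
  by (simp add: comp_perm_def)

lemma comp_perm_assoc:
  "set c \<subseteq> {1..length b} \<Longrightarrow> comp_perm (comp_perm a b) c = comp_perm a (comp_perm b c)"
  unfolding comp_perm_def by (force intro!: map_cong)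

lemma comp_perm_id_right: "length a = n \<Longrightarrow> comp_perm a [1..<Suc n] = a"
  unfolding comp_perm_def by (auto intro!: nth_equalityI)

lemma comp_perm_id_left: "set b \<subseteq> {1..n} \<Longrightarrow> comp_perm [1..<Suc n] b = b"
  unfolding comp_perm_def by (rule map_idI) (auto simp: subset_iff)

lemma atLeast1_atMost_eq_image_Suc: "{1..n} = Suc ` {..<n}"
  by (simp add: lessThan_atLeast0 atLeastLessThanSuc_atLeastAtMost)

lemma comp_perm_perms:
  assumes "a \<in> perms n" "b \<in> perms n"
  shows "comp_perm a b \<in> perms n"
proof (rule perms_if_length_set)
  have "set b = Suc ` {0..<n}"
    using assms by (metis perms_iff atLeast1_atMost_eq_image_Suc lessThan_atLeast0)
  then have "set (comp_perm a b) = (!) a ` {0..<n}"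
    by (simp only: comp_perm_def set_map image_image diff_Suc_1)
  also have "\<dots> = set a"
    using assms by (simp add: perms_iff nth_image)
  finally show "set (comp_perm a b) = {1..n}"
    using assms by (simp add: perms_iff)
qed (use assms in \<open>simp add: perms_iff\<close>)

lemma length_inv_perm [simp]: "length (inv_perm w) = length w"
  by (simp add: inv_perm_def)

lemma inv_perm_eq_map_pos:
  assumes "w \<in> perms n"
  shows "inv_perm w = map (\<lambda>a. Suc (pos w a)) [1..<Suc n]"
proof -
  have "(LEAST j. j < length w \<and> w ! j = a) = pos w a" if "a \<in> set w" for a
  proof (rule Least_equality)
    show "pos w a < length w \<and> w ! pos w a = a"
      using that by (simp add: pos_less_length nth_pos)
    show "pos w a \<le> j" if "j < length w \<and> w ! j = a" for j
      using that assms by (metis perms_iff pos_nth order_refl)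
  qed
  then show ?thesis
    using assms unfolding inv_perm_def perms_iff by (auto intro!: map_cong)
qed

lemma comp_inv_perm:
  assumes "w \<in> perms n" "set y \<subseteq> {1..n}"
  shows "comp_perm (inv_perm w) y = map (\<lambda>a. Suc (pos w a)) y"
  unfolding comp_perm_def inv_perm_eq_map_pos[OF assms(1)]
proof (rule map_cong)
  fix a assume "a \<in> set y"
  then have "1 \<le> a" "a \<le> n" using assms(2) by auto
  moreover from this have "[1..<Suc n] ! (a - 1) = a"
    by (subst nth_upt) auto
  ultimately show "map (\<lambda>a. Suc (pos w a)) [1..<Suc n] ! (a - 1) = Suc (pos w a)"
    by simp
qed simp

lemma inv_perm_perms:
  assumes "w \<in> perms n"
  shows "inv_perm w \<in> perms n"
proof (rule perms_if_length_set)
  have "set (inv_perm w) = Suc ` pos w ` set w"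
    using assms by (simp add: inv_perm_eq_map_pos perms_set image_image atLeastLessThanSuc_atLeastAtMost)
  also have "pos w ` set w = {..<n}"
    using assms by (metis pos_image perms_iff)
  finally show "set (inv_perm w) = {1..n}"
    by (simp only: atLeast1_atMost_eq_image_Suc)
qed (use assms in \<open>simp add: perms_length\<close>)

lemma comp_inv_perm_left:
  assumes "w \<in> perms n"
  shows "comp_perm (inv_perm w) w = [1..<Suc n]"
proof -
  have "comp_perm (inv_perm w) w = map Suc (map (pos w) w)"
    using assms by (simp add: comp_inv_perm perms_set)
  also have "\<dots> = [1..<Suc n]"
    using assms by (simp add: map_pos_self perms_iff map_Suc_upt)
  finally show ?thesis .
qed

lemma comp_inv_perm_right:
  assumes "w \<in> perms n"
  shows "comp_perm w (inv_perm w) = [1..<Suc n]"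
  using assms unfolding comp_perm_def inv_perm_eq_map_pos[OF assms]
  by (intro nth_equalityI) (auto simp: nth_pos perms_iff)

lemma comp_inv_perm_eq_iff:
  assumes y: "y \<in> perms n" and z: "z \<in> perms n"
  shows "comp_perm y (inv_perm z) = w \<longleftrightarrow> w \<in> perms n \<and> comp_perm (inv_perm w) y = z"
proof
  assume w_eq: "comp_perm y (inv_perm z) = w"
  then have w: "w \<in> perms n"
    using comp_perm_perms inv_perm_perms y z by blast
  have "comp_perm w z = comp_perm y (comp_perm (inv_perm z) z)"
    using z by (simp add: w_eq [symmetric] comp_perm_assoc perms_set perms_length)
  also have "\<dots> = y"
    using z comp_perm_id_right[OF perms_length[OF y]] by (simp add: comp_inv_perm_left)
  finally have y_eq: "comp_perm w z = y" .
  have "comp_perm (inv_perm w) y = comp_perm (comp_perm (inv_perm w) w) z"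
    using w z by (simp add: y_eq [symmetric] comp_perm_assoc perms_set perms_length)
  also have "\<dots> = z"
    using comp_perm_id_left[OF equalityD1[OF perms_set[OF z]]] by (simp add: comp_inv_perm_left[OF w])
  finally show "w \<in> perms n \<and> comp_perm (inv_perm w) y = z"
    using w by blast
next
  assume "w \<in> perms n \<and> comp_perm (inv_perm w) y = z"
  then have w: "w \<in> perms n" and z_eq: "comp_perm (inv_perm w) y = z" by blast+
  have "comp_perm w z = comp_perm (comp_perm w (inv_perm w)) y"
    using w y by (simp add: z_eq [symmetric] comp_perm_assoc perms_set perms_length)
  also have "\<dots> = y"
    using comp_perm_id_left[OF equalityD1[OF perms_set[OF y]]] by (simp add: comp_inv_perm_right[OF w])
  finally have y_eq: "comp_perm w z = y" .
  have "comp_perm y (inv_perm z) = comp_perm w (comp_perm z (inv_perm z))"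
    using z inv_perm_perms[OF z] by (simp add: y_eq [symmetric] comp_perm_assoc perms_set perms_length)
  also have "\<dots> = w"
    using z comp_perm_id_right[OF perms_length[OF w]] by (simp add: comp_inv_perm_right)
  finally show "comp_perm y (inv_perm z) = w" .
qed

section \<open>Descent sets\<close>

lemma Des_map: "Des (map f xs) = {i \<in> {1..<length xs}. f (xs ! i) < f (xs ! (i - 1))}"
  by (auto simp: Des_def)

lemma Des_map_cong:
  assumes "\<And>a b. a \<in> set xs \<Longrightarrow> b \<in> set xs \<Longrightarrow> f a < f b \<longleftrightarrow> g a < g b"
  shows "Des (map f xs) = Des (map g xs)"
  using assms by (auto simp: Des_map)

lemma Des_empty_iff_sorted: "Des xs = {} \<longleftrightarrow> sorted xs"
proof -
  have "Des xs = {} \<longleftrightarrow> (\<forall>i. Suc i < length xs \<longrightarrow> \<not> xs ! Suc i < xs ! i)"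
    unfolding Des_def by (auto simp: gr0_conv_Suc Suc_le_eq)
  then show ?thesis
    by (simp add: sorted_iff_nth_Suc not_less)
qed

lemma Des_append: "Des (xs @ ys) - {length xs} = Des xs \<union> (+) (length xs) ` Des ys"
proof (rule set_eqI)
  fix i
  show "i \<in> Des (xs @ ys) - {length xs} \<longleftrightarrow> i \<in> Des xs \<union> (+) (length xs) ` Des ys"
  proof (cases "i < length xs")
    case True
    then show ?thesis
      by (auto simp: Des_def nth_append)
  next
    case False
    then obtain j where i: "i = length xs + j"
      by (metis le_add_diff_inverse not_less)
    show ?thesis
      unfolding i by (cases j) (auto simp: Des_def nth_append)
  qed
qed

lemma Des_append_subset_iff:
  assumes "J \<subseteq> {1..<length xs}"
  shows "Des (xs @ ys) \<subseteq> insert (length xs) J \<longleftrightarrow> Des xs \<subseteq> J \<and> Des ys = {}"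
proof -
  have "Des (xs @ ys) \<subseteq> insert (length xs) J \<longleftrightarrow> Des xs \<union> (+) (length xs) ` Des ys \<subseteq> J"
    using assms by (auto simp flip: Des_append)
  also have "\<dots> \<longleftrightarrow> Des xs \<subseteq> J \<and> Des ys = {}"
  proof -
    have "length xs + d \<notin> J" for d
      using assms by auto
    then show ?thesis
      by blast
  qed
  finally show ?thesis .
qed

lemma sorted_pos_filter:
  assumes "distinct w"
  shows "sorted_wrt (<) (map (pos w) (filter P w))"
proof -
  have "filter P w = map ((!) w) (filter (P \<circ> (!) w) [0..<length w])"
    by (metis filter_map map_nth)
  then have "map (pos w) (filter P w) = filter (P \<circ> (!) w) [0..<length w]"
    using assms by (auto simp: pos_nth intro!: map_idI)
  then show ?thesis
    by (simp add: sorted_wrt_filter)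
qed

lemma filter_eq_iff_sorted_pos:
  assumes w: "distinct w" and c: "distinct c" and set_c: "set c = {a \<in> set w. P a}"
  shows "filter P w = c \<longleftrightarrow> sorted_wrt (<) (map (pos w) c)"
proof
  show "filter P w = c \<Longrightarrow> sorted_wrt (<) (map (pos w) c)"
    using sorted_pos_filter[OF w] by blast
next
  assume sorted_c: "sorted_wrt (<) (map (pos w) c)"
  have "map (pos w) (filter P w) = map (pos w) c"
    using strict_sorted_equal[OF sorted_c sorted_pos_filter[OF w]] set_c by simp
  moreover have "inj_on (pos w) (set (filter P w) \<union> set c)"
    using set_c by (intro inj_on_subset[OF inj_on_pos]) auto
  ultimately show "filter P w = c"
    by (simp add: inj_on_map_eq_map)
qed

lemma pos_filter_less_iff:
  "distinct w \<Longrightarrow> a \<in> set (filter P w) \<Longrightarrow> b \<in> set (filter P w) \<Longrightarrow>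
    pos (filter P w) a < pos (filter P w) b \<longleftrightarrow> pos w a < pos w b"
  by (induction w) (auto split: if_splits)

lemma Des_comp_inv_perm_empty_iff:
  assumes w: "w \<in> perms n" and c: "distinct c" and set_c: "set c = {a \<in> set w. P a}"
  shows "Des (comp_perm (inv_perm w) c) = {} \<longleftrightarrow> filter P w = c"
proof -
  have "set c \<subseteq> {1..n}"
    using set_c perms_set[OF w] by auto
  then have "Des (comp_perm (inv_perm w) c) = Des (map (\<lambda>a. Suc (pos w a)) c)"
    by (simp only: comp_inv_perm[OF w])
  also have "\<dots> = Des (map (pos w) c)"
    by (rule Des_map_cong) simp
  finally have "Des (comp_perm (inv_perm w) c) = Des (map (pos w) c)" .
  moreover have "distinct (map (pos w) c)"
    using c set_c inj_on_subset[OF inj_on_pos] by (simp add: distinct_map)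
  ultimately show ?thesis
    using w c set_c by (simp add: Des_empty_iff_sorted filter_eq_iff_sorted_pos strict_sorted_iff perms_iff)
qed

section \<open>Standardization and the permutations v_J\<close>

definition rank :: "nat list \<Rightarrow> nat \<Rightarrow> nat" where
  "rank xs x = card {y \<in> set xs. y \<le> x}"

lemma st_eq_map_rank: "st xs = map (rank xs) xs"
  by (simp add: st_def rank_def)

lemma rank_strict_mono:
  assumes "y \<in> set xs" "x < y"
  shows "rank xs x < rank xs y"
proof -
  have "y \<in> {z \<in> set xs. z \<le> y} - {z \<in> set xs. z \<le> x}"
    using assms by auto
  moreover have "{z \<in> set xs. z \<le> x} \<subseteq> {z \<in> set xs. z \<le> y}"
    using assms by auto
  ultimately have "{z \<in> set xs. z \<le> x} \<subset> {z \<in> set xs. z \<le> y}"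
    by blast
  then show ?thesis
    unfolding rank_def by (rule psubset_card_mono[rotated]) simp
qed

lemma rank_bounds: "x \<in> set xs \<Longrightarrow> rank xs x \<in> {1..length xs}"
proof -
  assume x: "x \<in> set xs"
  then have "0 < rank xs x"
    unfolding rank_def by (auto simp: card_gt_0_iff)
  moreover have "rank xs x \<le> card (set xs)"
    unfolding rank_def by (rule card_mono) auto
  ultimately show ?thesis
    using card_length[of xs] by simp
qed

lemma st_perms: "distinct xs \<Longrightarrow> st xs \<in> perms (length xs)"
proof -
  assume xs: "distinct xs"
  have "inj_on (rank xs) (set xs)"
    by (rule inj_onI) (metis rank_strict_mono less_irrefl linorder_neqE_nat)
  then have "distinct (st xs)"
    using xs by (simp add: st_eq_map_rank distinct_map)
  moreover have "set (st xs) \<subseteq> {1..length xs}"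
    using rank_bounds by (auto simp: st_eq_map_rank)
  moreover have "card (set (st xs)) = length xs"
    using distinct_card[OF \<open>distinct (st xs)\<close>] by (simp add: st_def)
  ultimately have "set (st xs) = {1..length xs}"
    by (intro card_subset_eq) auto
  then show ?thesis
    by (intro perms_if_length_set) (simp_all add: st_def)
qed

lemma st_map_strict_mono:
  assumes g: "\<And>x y. x \<in> set xs \<Longrightarrow> y \<in> set xs \<Longrightarrow> x < y \<Longrightarrow> g x < g y"
  shows "st (map g xs) = st xs"
proof -
  have le_iff: "g y \<le> g x \<longleftrightarrow> y \<le> x" if "x \<in> set xs" "y \<in> set xs" for x y
    using g[OF that] g[OF that(2,1)] by (metis linorder_neqE_nat not_le order.order_iff_strict)
  have "inj_on g (set xs)"
    by (rule inj_onI) (metis g less_irrefl linorder_neqE_nat)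
  then have "rank (map g xs) (g x) = rank xs x" if "x \<in> set xs" for x
  proof -
    have "{y \<in> set (map g xs). y \<le> g x} = g ` {y \<in> set xs. y \<le> x}"
      using le_iff[OF that] by auto
    then show ?thesis
      unfolding rank_def using \<open>inj_on g (set xs)\<close> by (simp add: card_image inj_on_subset)
  qed
  then show ?thesis
    by (simp add: st_eq_map_rank)
qed

lemma st_perm:
  assumes "v \<in> perms n"
  shows "st v = v"
proof -
  have "{y \<in> set v. y \<le> x} = {1..x}" if "x \<in> set v" for x
    using that perms_set[OF assms] by auto
  then show ?thesis
    unfolding st_def by (simp add: map_idI)
qed

lemma st_Nil [simp]: "st [] = []"
  by (simp add: st_def)

lemma sorted_list_of_set_insert_greater:
  assumes "finite A" "\<forall>a\<in>A. a < p"
  shows "sorted_list_of_set (insert p A) = sorted_list_of_set A @ [p]"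
proof (rule sorted_distinct_set_unique)
  show "sorted (sorted_list_of_set A @ [p])" "distinct (sorted_list_of_set A @ [p])"
    using assms by (auto simp: sorted_append less_imp_le)
  have "set (sorted_list_of_set (insert p A)) = insert p A"
    using assms by (intro set_sorted_list_of_set) simp
  then show "set (sorted_list_of_set (insert p A)) = set (sorted_list_of_set A @ [p])"
    using assms by simp
qed simp_all

lemma blocks_insert_greater:
  assumes J: "J \<subseteq> {1..<p}" and p: "p \<le> length v"
  shows "blocks v (insert p J) = blocks (take p v) J @ [drop p v]"
proof -
  have fin_J: "finite J"
    using J finite_subset by blast
  define b where "b = 0 # sorted_list_of_set J @ [p]"
  let ?block = "\<lambda>c u i. take (c ! Suc i - c ! i) (drop (c ! i) u)"
  have "sorted_list_of_set (insert p J) = sorted_list_of_set J @ [p]"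
    using J by (intro sorted_list_of_set_insert_greater[OF fin_J]) auto
  then have b_ext: "0 # sorted_list_of_set (insert p J) @ [length v] = b @ [length v]"
    by (simp add: b_def)
  have blocks_v: "blocks v (insert p J) = map (?block (b @ [length v]) v) [0..<length b]"
    unfolding blocks_def Let_def b_ext by simp
  have blocks_take: "blocks (take p v) J = map (?block b (take p v)) [0..<length b - 1]"
    using p unfolding blocks_def Let_def b_def by simp
  have sorted_b: "sorted b" and b_le_p: "\<forall>x\<in>set b. x \<le> p"
    using J fin_J by (auto simp: b_def sorted_append less_imp_le)
  have "?block (b @ [length v]) v i = ?block b (take p v) i" if "Suc i < length b" for i
  proof -
    have "b ! i \<le> b ! Suc i" "b ! Suc i \<le> p"
      using that sorted_b b_le_p by (auto simp: sorted_iff_nth_Suc)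
    then show ?thesis
      using that by (simp add: nth_append drop_take min_def)
  qed
  moreover have "?block (b @ [length v]) v (length b - 1) = drop p v"
    by (simp add: b_def nth_append)
  moreover have "[0..<length b] = [0..<length b - 1] @ [length b - 1]"
    by (simp add: b_def upt_Suc_append[symmetric])
  ultimately show ?thesis
    unfolding blocks_v blocks_take by simp
qed

lemma blocks_map: "blocks (map g v) J = map (map g) (blocks v J)"
  unfolding blocks_def Let_def by (simp add: take_map drop_map)

lemma set_blocks_subset: "b \<in> set (blocks v J) \<Longrightarrow> set b \<subseteq> set v"
  unfolding blocks_def Let_def by (auto dest: in_set_takeD in_set_dropD)

lemma vJ_empty: "vJ v {} = st v"
  by (simp add: vJ_def blocks_def upt_Suc cross_def)

lemma vJ_insert_greater:
  assumes "J \<subseteq> {1..<p}" "p \<le> length v"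
  shows "vJ v (insert p J) = cross (vJ (st (take p v)) J) (st (drop p v))"
proof -
  have "st (map (rank (take p v)) b) = st b" if "b \<in> set (blocks (take p v) J)" for b
    using set_blocks_subset[OF that] by (intro st_map_strict_mono rank_strict_mono) auto
  then have "map st (blocks (st (take p v)) J) = map st (blocks (take p v) J)"
    by (simp add: st_eq_map_rank[of "take p v"] blocks_map)
  then show ?thesis
    unfolding vJ_def blocks_insert_greater[OF assms] by simp
qed

lemma cross_perms:
  assumes "u \<in> perms p" "x \<in> perms q"
  shows "cross u x \<in> perms (p + q)"
proof (rule perms_if_length_set)
  show "length (cross u x) = p + q"
    using assms by (simp add: cross_def perms_length)
  have "(+) p ` {1..q} = {Suc p..p + q}"
    by simp
  then show "set (cross u x) = {1..p + q}"
    using assms by (auto simp: cross_def perms_set perms_length[OF assms(1)])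
qed

lemma vJ_perms: "distinct v \<Longrightarrow> J \<subseteq> {1..<length v} \<Longrightarrow> vJ v J \<in> perms (length v)"
proof (induction "card J" arbitrary: v J)
  case 0
  then have "J = {}"
    using finite_subset by fastforce
  then show ?case
    using st_perms[OF 0(2)] by (simp add: vJ_empty)
next
  case (Suc k)
  have fin_J: "finite J"
    using Suc.prems(2) finite_subset by blast
  define p where "p = Max J"
  have "J \<noteq> {}"
    using Suc.hyps(2) by auto
  then have "p \<in> J"
    using fin_J by (simp add: p_def)
  then have p: "p \<in> J" "1 \<le> p" "p < length v"
    using Suc.prems(2) by auto
  have J': "J - {p} \<subseteq> {1..<p}"
    using fin_J Suc.prems(2) by (auto simp: p_def less_le)
  have "insert p (J - {p}) = J"
    using p by blast
  then have "vJ v J = cross (vJ (st (take p v)) (J - {p})) (st (drop p v))"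
    using vJ_insert_greater[OF J'] p by force
  moreover have "vJ (st (take p v)) (J - {p}) \<in> perms p"
    using Suc.hyps(1)[of "J - {p}" "st (take p v)"] Suc.hyps(2) fin_J p J' st_perms[of "take p v"] Suc.prems(1)
    by (simp add: perms_iff)
  moreover have "st (drop p v) \<in> perms (length v - p)"
    using st_perms[of "drop p v"] Suc.prems(1) by simp
  ultimately show ?case
    using cross_perms p by fastforce
qed

section \<open>The product on the basis\<close>

(* The only candidate shuffle is zeta = w^-1 (cross u x); its two halves increase exactly when u
   and the shifted x occur in w in their own order. *)
lemma mulF_eq:
  assumes u: "u \<in> perms p" and x: "x \<in> perms q"
  shows "mulF u x w =
    (if w \<in> perms (p + q) \<and> filter (\<lambda>a. a \<le> p) w = u \<and> filter (\<lambda>a. p < a) w = map ((+) p) x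
     then 1 else 0)"
proof -
  define y where "y = cross u x"
  have y: "y \<in> perms (p + q)"
    unfolding y_def using cross_perms[OF u x] .
  have "{z \<in> shuffles_perm p q. comp_perm y (inv_perm z) = w}
      = {z \<in> shuffles_perm p q. w \<in> perms (p + q) \<and> comp_perm (inv_perm w) y = z}"
    using comp_inv_perm_eq_iff[OF y] by (auto simp: shuffles_perm_def)
  then have mulF_card: "mulF u x w =
      of_nat (card {z \<in> shuffles_perm p q. w \<in> perms (p + q) \<and> comp_perm (inv_perm w) y = z})"
    by (simp add: mulF_def y_def perms_length[OF u] perms_length[OF x])
  show ?thesis
  proof (cases "w \<in> perms (p + q)")
    case False
    then show ?thesis
      unfolding mulF_card by simp
  next
    case w: True
    define z where "z = comp_perm (inv_perm w) y"
    have z: "z = map (\<lambda>a. Suc (pos w a)) u @ map (\<lambda>a. Suc (pos w a)) (map ((+) p) x)"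
      using comp_inv_perm[OF w] perms_set[OF y] by (simp add: z_def y_def cross_def perms_length[OF u])
    have distinct_w: "distinct w"
      using w by (simp add: perms_iff)
    have "set u = {a \<in> set w. a \<le> p}"
      using perms_set[OF u] perms_set[OF w] by auto
    then have "filter (\<lambda>a. a \<le> p) w = u \<longleftrightarrow> sorted_wrt (<) (map (pos w) u)"
      using u by (intro filter_eq_iff_sorted_pos[OF distinct_w]) (simp_all add: perms_iff)
    then have sorted_take: "sorted_wrt (<) (take p z) \<longleftrightarrow> filter (\<lambda>a. a \<le> p) w = u"
      by (simp add: z perms_length[OF u] sorted_wrt_map)
    have "set (map ((+) p) x) = {a \<in> set w. p < a}"
      using perms_set[OF x] perms_set[OF w] by (auto simp: image_iff)
    then have "filter (\<lambda>a. p < a) w = map ((+) p) x \<longleftrightarrow> sorted_wrt (<) (map (pos w) (map ((+) p) x))"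
      using x by (intro filter_eq_iff_sorted_pos[OF distinct_w]) (simp_all add: perms_iff distinct_map)
    then have sorted_drop: "sorted_wrt (<) (drop p z) \<longleftrightarrow> filter (\<lambda>a. p < a) w = map ((+) p) x"
      by (simp add: z perms_length[OF u] sorted_wrt_map)
    have "z \<in> perms (p + q)"
      unfolding z_def using comp_perm_perms[OF inv_perm_perms[OF w] y] .
    then have "{z' \<in> shuffles_perm p q. w \<in> perms (p + q) \<and> z = z'} =
      (if filter (\<lambda>a. a \<le> p) w = u \<and> filter (\<lambda>a. p < a) w = map ((+) p) x then {z} else {})"
      using w sorted_take sorted_drop by (auto simp: shuffles_perm_def)
    then show ?thesis
      using w unfolding mulF_card z_def by simp
  qed
qed

lemma mult_basisF_right:
  assumes f: "\<And>u. f u \<noteq> 0 \<Longrightarrow> u \<in> perms p" and x: "x \<in> perms q"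
  shows "mult f (basisF x) w =
    (if w \<in> perms (p + q) \<and> filter (\<lambda>a. p < a) w = map ((+) p) x
     then f (filter (\<lambda>a. a \<le> p) w) else 0)"
proof -
  have fin: "finite {u. f u \<noteq> 0}"
    using f by (intro finite_subset[OF _ finite_perms]) auto
  have "mult f (basisF x) w = (\<Sum>u\<in>{u. f u \<noteq> 0}. f u * mulF u x w)"
    by (simp add: mult_def basisF_def)
  also have "\<dots> = (\<Sum>u\<in>{u. f u \<noteq> 0}.
      if w \<in> perms (p + q) \<and> filter (\<lambda>a. p < a) w = map ((+) p) x \<and> u = filter (\<lambda>a. a \<le> p) w
      then f u else 0)"
  proof (rule sum.cong [OF refl])
    fix u
    assume "u \<in> {u. f u \<noteq> 0}"
    then have "u \<in> perms p"
      using f by blast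
    then show "f u * mulF u x w =
      (if w \<in> perms (p + q) \<and> filter (\<lambda>a. p < a) w = map ((+) p) x \<and> u = filter (\<lambda>a. a \<le> p) w
       then f u else 0)"
      using mulF_eq[OF _ x] by auto
  qed
  also have "\<dots> = (if w \<in> perms (p + q) \<and> filter (\<lambda>a. p < a) w = map ((+) p) x
     then f (filter (\<lambda>a. a \<le> p) w) else 0)"
    using fin by auto
  finally show ?thesis .
qed

lemma mult_basisF_Nil_right:
  assumes "in_ssym f"
  shows "mult f (basisF []) = f"
proof
  fix w
  have "mulF u [] w = (if w = u then 1 else 0)" if "u \<in> perms m" for u m
  proof -
    have "filter (\<lambda>a. a \<le> m) w = w" if "w \<in> perms m"
      using that by (auto simp: perms_iff)
    then show ?thesis
      using that mulF_eq[OF that Nil_perms, of w] by (auto simp: perms_iff)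
  qed
  moreover have "{u. f u \<noteq> 0} \<subseteq> (\<Union>m. perms m)" "finite {u. f u \<noteq> 0}"
    using assms by (auto simp: in_ssym_def)
  ultimately have "(\<Sum>u\<in>{u. f u \<noteq> 0}. f u * mulF u [] w) = (\<Sum>u\<in>{u. f u \<noteq> 0}. if w = u then f u else 0)"
    by (intro sum.cong) auto
  then show "mult f (basisF []) w = f w"
    using \<open>finite {u. f u \<noteq> 0}\<close> by (simp add: mult_def basisF_def)
qed

lemma mult_basisF_Nil_left:
  assumes "v \<in> perms n"
  shows "mult (basisF []) (basisF v) = basisF v"
proof
  fix w
  have "basisF [] u \<noteq> 0 \<Longrightarrow> u \<in> perms 0" for u
    by (simp add: basisF_def Nil_perms split: if_splits)
  then have "mult (basisF []) (basisF v) w =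
      (if w \<in> perms n \<and> filter (\<lambda>a. 0 < a) w = map ((+) 0) v then basisF [] (filter (\<lambda>a. a \<le> 0) w) else 0)"
    using mult_basisF_right[OF _ assms, of "basisF []" 0 w] by simp
  moreover have "map ((+) 0) v = v"
    by (rule map_idI) simp
  moreover have "filter (\<lambda>a. 0 < a) w = w \<and> filter (\<lambda>a. a \<le> 0) w = []" if "w \<in> perms n"
    using perms_set[OF that] by (auto simp: filter_id_conv filter_empty_conv)
  ultimately show "mult (basisF []) (basisF v) w = basisF v w"
    using assms by (auto simp: basisF_def)
qed

section \<open>The antipode recursion\<close>

lemma antipode_Nil:
  assumes "is_antipode S"
  shows "S [] = basisF []"
proof -
  have "in_ssym (S [])"
    using assms Nil_perms by (auto simp: is_antipode_def)
  moreover have "(\<lambda>w. \<Sum>p\<le>0. mult (S (st (take p []))) (basisF (st (drop p []))) w) = basisF []"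
    using assms Nil_perms unfolding is_antipode_def by fastforce
  ultimately show ?thesis
    using mult_basisF_Nil_right by simp
qed

lemma antipode_recursion:
  assumes S: "is_antipode S" and v: "v \<in> perms n" and n: "1 \<le> n"
  shows "S v w = - basisF v w - (\<Sum>p\<in>{1..<n}. mult (S (st (take p v))) (basisF (st (drop p v))) w)"
proof -
  let ?term = "\<lambda>p. mult (S (st (take p v))) (basisF (st (drop p v))) w"
  have "(\<lambda>w. \<Sum>p\<le>n. mult (S (st (take p v))) (basisF (st (drop p v))) w) = (\<lambda>_. 0)"
    using S v n by (simp add: is_antipode_def)
  from fun_cong[OF this, of w] have "(\<Sum>p\<le>n. ?term p) = 0"
    by simp
  moreover have "{..n} = insert 0 (insert n {1..<n})"
    using n by auto
  moreover have "?term 0 = basisF v w"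
    using S v by (simp add: antipode_Nil st_perm mult_basisF_Nil_left)
  moreover have "?term n = S v w"
    using S v by (simp add: perms_length st_perm mult_basisF_Nil_right is_antipode_def)
  ultimately show ?thesis
    using n by simp
qed

section \<open>The same recursion for lambda\<close>

lemma sum_Pow_by_Max:
  fixes f :: "nat set \<Rightarrow> 'a::comm_monoid_add"
  shows "(\<Sum>J\<in>Pow {1..<n}. f J) = f {} + (\<Sum>p\<in>{1..<n}. \<Sum>J\<in>Pow {1..<p}. f (insert p J))"
proof (induction n)
  case (Suc n)
  show ?case
  proof (cases "n = 0")
    case False
    then have n: "{1..<Suc n} = insert n {1..<n}"
      by auto
    have "inj_on (insert n) (Pow {1..<n})"
      by (rule inj_onI) (metis Pow_iff atLeastLessThan_iff insert_ident less_irrefl subsetD)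
    then have "(\<Sum>J\<in>Pow {1..<Suc n}. f J) = (\<Sum>J\<in>Pow {1..<n}. f J) + (\<Sum>J\<in>Pow {1..<n}. f (insert n J))"
      unfolding n Pow_insert by (subst sum.union_disjoint) (auto simp: sum.reindex)
    then show ?thesis
      unfolding Suc.IH n by (simp add: add_ac)
  qed simp
qed simp

lemma lam_eq_signed_sum:
  "lam n v w = - (\<Sum>J\<in>Pow {1..<n}. if Des (comp_perm (inv_perm w) (vJ v J)) \<subseteq> J then (-1) ^ card J else 0)"
proof -
  let ?G = "\<lambda>J. Des (comp_perm (inv_perm w) (vJ v J)) \<subseteq> J"
  have count: "int (card {J. J \<subseteq> {1..<n} \<and> ?G J \<and> P J}) = (\<Sum>J\<in>Pow {1..<n}. if ?G J \<and> P J then 1 else 0)"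
    for P :: "nat set \<Rightarrow> bool"
  proof -
    have "{J. J \<subseteq> {1..<n} \<and> ?G J \<and> P J} = {J \<in> Pow {1..<n}. ?G J \<and> P J}"
      by auto
    then show ?thesis
      using sum.inter_filter[of "Pow {1..<n}" "\<lambda>_. 1::int"] by simp
  qed
  show ?thesis
    unfolding lam_def count sum_subtractf[symmetric] sum_negf[symmetric]
    by (rule sum.cong) auto
qed

lemma Des_vJ_empty_subset_iff:
  assumes v: "v \<in> perms n" and w: "w \<in> perms n"
  shows "Des (comp_perm (inv_perm w) (vJ v {})) \<subseteq> {} \<longleftrightarrow> w = v"
proof -
  have "set v = {a \<in> set w. True}"
    using perms_set[OF v] perms_set[OF w] by auto
  then have "Des (comp_perm (inv_perm w) v) = {} \<longleftrightarrow> filter (\<lambda>_. True) w = v"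
    using v by (intro Des_comp_inv_perm_empty_iff[OF w]) (simp add: perms_iff)
  then show ?thesis
    using st_perm[OF v] by (auto simp: vJ_empty)
qed

(* Here v_(insert p J) = cross v'_J st(v_p+1..v_n) with v' = st(v_1..v_p); on the first factor,
   w^-1 only matters through the relative order in w of the values <= p. *)
lemma Des_vJ_insert_greater_subset_iff:
  assumes v: "v \<in> perms n" and w: "w \<in> perms n" and J: "J \<subseteq> {1..<p}" and p: "p < n"
  shows "Des (comp_perm (inv_perm w) (vJ v (insert p J))) \<subseteq> insert p J \<longleftrightarrow>
    filter (\<lambda>a. p < a) w = map ((+) p) (st (drop p v)) \<and>
    Des (comp_perm (inv_perm (filter (\<lambda>a. a \<le> p) w)) (vJ (st (take p v)) J)) \<subseteq> J"
proof -
  define b where "b = vJ (st (take p v)) J"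
  define c where "c = map ((+) p) (st (drop p v))"
  define u where "u = filter (\<lambda>a. a \<le> p) w"
  have "st (take p v) \<in> perms p"
    using st_perms[of "take p v"] v p by (simp add: perms_iff)
  then have b: "b \<in> perms p"
    unfolding b_def using vJ_perms[of "st (take p v)" J] J by (simp add: perms_iff)
  have u: "u \<in> perms p"
    unfolding u_def using filter_le_perms[OF w] p by simp
  have "vJ v (insert p J) = cross b (st (drop p v))"
    using vJ_insert_greater[OF J] p by (simp add: b_def perms_length[OF v])
  also have "\<dots> = b @ c"
    by (simp add: cross_def c_def perms_length[OF b])
  finally have "vJ v (insert p J) = b @ c" .
  then have "Des (comp_perm (inv_perm w) (vJ v (insert p J))) \<subseteq> insert p J \<longleftrightarrow>
      Des (comp_perm (inv_perm w) b) \<subseteq> J \<and> Des (comp_perm (inv_perm w) c) = {}"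
    using J Des_append_subset_iff[of J "comp_perm (inv_perm w) b"] perms_length[OF b]
    by (simp add: comp_perm_def)
  moreover have "Des (comp_perm (inv_perm w) c) = {} \<longleftrightarrow> filter (\<lambda>a. p < a) w = c"
  proof -
    have x: "st (drop p v) \<in> perms (n - p)"
      using st_perms[of "drop p v"] v by (simp add: perms_iff)
    then have "distinct c"
      by (simp add: c_def distinct_map perms_iff)
    have "set c = (+) p ` {1..n - p}"
      by (simp add: c_def perms_set[OF x])
    also have "\<dots> = {a \<in> {1..n}. p < a}"
      using p by auto
    finally show ?thesis
      using Des_comp_inv_perm_empty_iff[OF w \<open>distinct c\<close>] perms_set[OF w] by simp
  qed
  moreover have "Des (comp_perm (inv_perm w) b) = Des (comp_perm (inv_perm u) b)"
  proof -
    have "set b \<subseteq> {1..n}" "set b \<subseteq> {1..p}"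
      using perms_set[OF b] p by auto
    then have comp_w: "comp_perm (inv_perm w) b = map (\<lambda>a. Suc (pos w a)) b"
      and comp_u: "comp_perm (inv_perm u) b = map (\<lambda>a. Suc (pos u a)) b"
      by (simp_all only: comp_inv_perm[OF w] comp_inv_perm[OF u])
    have "pos u a < pos u a' \<longleftrightarrow> pos w a < pos w a'" if "a \<in> set b" "a' \<in> set b" for a a'
    proof -
      have "a \<in> set u" "a' \<in> set u"
        using that perms_set[OF b] perms_set[OF u] by simp_all
      then show ?thesis
        unfolding u_def using w by (intro pos_filter_less_iff) (simp_all add: perms_iff)
    qed
    then show ?thesis
      unfolding comp_w comp_u by (intro Des_map_cong) simp
  qed
  ultimately show ?thesis
    unfolding b_def c_def u_def by blast
qed

lemma lam_recursion:
  assumes v: "v \<in> perms n" and w: "w \<in> perms n"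
  shows "lam n v w = - (if w = v then 1 else 0)
    - (\<Sum>p\<in>{1..<n}. if filter (\<lambda>a. p < a) w = map ((+) p) (st (drop p v))
                     then lam p (st (take p v)) (filter (\<lambda>a. a \<le> p) w) else 0)"
proof -
  define g :: "nat list \<Rightarrow> nat list \<Rightarrow> nat set \<Rightarrow> int" where
    "g v' w' J = (if Des (comp_perm (inv_perm w') (vJ v' J)) \<subseteq> J then (-1) ^ card J else 0)" for v' w' J
  have lam_g: "lam m v' w' = - (\<Sum>J\<in>Pow {1..<m}. g v' w' J)" for m v' w'
    by (simp add: lam_eq_signed_sum g_def)
  have g_insert: "(\<Sum>J\<in>Pow {1..<p}. g v w (insert p J)) =
      (if filter (\<lambda>a. p < a) w = map ((+) p) (st (drop p v))
       then lam p (st (take p v)) (filter (\<lambda>a. a \<le> p) w) else 0)" if p: "p \<in> {1..<n}" for p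
  proof -
    let ?C = "filter (\<lambda>a. p < a) w = map ((+) p) (st (drop p v))"
    let ?g' = "g (st (take p v)) (filter (\<lambda>a. a \<le> p) w)"
    have "g v w (insert p J) = (if ?C then - ?g' J else 0)" if "J \<in> Pow {1..<p}" for J
    proof -
      have J: "J \<subseteq> {1..<p}" and "finite J" "p \<notin> J"
        using that finite_subset by auto
      then have "card (insert p J) = Suc (card J)"
        by simp
      moreover have "p < n"
        using p by simp
      ultimately show ?thesis
        unfolding g_def Des_vJ_insert_greater_subset_iff[OF v w J \<open>p < n\<close>] by simp
    qed
    then have "(\<Sum>J\<in>Pow {1..<p}. g v w (insert p J)) = (if ?C then - (\<Sum>J\<in>Pow {1..<p}. ?g' J) else 0)"
      by (cases ?C) (simp_all add: sum_negf)
    then show ?thesis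
      by (simp only: lam_g)
  qed
  have "lam n v w = - (g v w {} + (\<Sum>p\<in>{1..<n}. \<Sum>J\<in>Pow {1..<p}. g v w (insert p J)))"
    unfolding lam_g by (subst sum_Pow_by_Max) (rule refl)
  also have "g v w {} = (if w = v then 1 else 0)"
    using Des_vJ_empty_subset_iff[OF v w] by (simp add: g_def)
  also have "(\<Sum>p\<in>{1..<n}. \<Sum>J\<in>Pow {1..<p}. g v w (insert p J)) =
      (\<Sum>p\<in>{1..<n}. if filter (\<lambda>a. p < a) w = map ((+) p) (st (drop p v))
                     then lam p (st (take p v)) (filter (\<lambda>a. a \<le> p) w) else 0)"
    using g_insert by (rule sum.cong [OF refl])
  finally show ?thesis
    by simp
qed

lemma antipode_eq_lam:
  assumes S: "is_antipode S" and "1 \<le> n" "v \<in> perms n"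
  shows "S v w = (if w \<in> perms n then of_int (lam n v w) else 0)"
  using assms(2,3)
proof (induction n arbitrary: v w rule: less_induct)
  case (less n)
  note v = less.prems(2)
  let ?C = "\<lambda>p. filter (\<lambda>a. p < a) w = map ((+) p) (st (drop p v))"
  have mult_eq: "mult (S (st (take p v))) (basisF (st (drop p v))) w =
      (if w \<in> perms n \<and> ?C p then of_int (lam p (st (take p v)) (filter (\<lambda>a. a \<le> p) w)) else 0)"
    if p: "p \<in> {1..<n}" for p
  proof -
    have "st (take p v) \<in> perms p"
      using st_perms[of "take p v"] v p by (simp add: perms_iff)
    then have IH: "S (st (take p v)) = (\<lambda>u. if u \<in> perms p then of_int (lam p (st (take p v)) u) else 0)"
      using less.IH p by auto
    have "st (drop p v) \<in> perms (n - p)"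
      using st_perms[of "drop p v"] v by (simp add: perms_iff)
    from mult_basisF_right[OF _ this, of "S (st (take p v))" p w]
    show ?thesis
      using p filter_le_perms[of w n p] by (simp add: IH split: if_splits)
  qed
  show ?case
  proof (cases "w \<in> perms n")
    case True
    have "(\<Sum>p\<in>{1..<n}. mult (S (st (take p v))) (basisF (st (drop p v))) w) =
        (\<Sum>p\<in>{1..<n}. of_int (if ?C p then lam p (st (take p v)) (filter (\<lambda>a. a \<le> p) w) else 0))"
      using mult_eq True by (intro sum.cong) auto
    then show ?thesis
      using antipode_recursion[OF S v less.prems(1), of w] lam_recursion[OF v True] True
      by (simp add: basisF_def)
  next
    case False
    then have "w \<noteq> v"
      using v by blast
    then show ?thesis
      using False antipode_recursion[OF S v less.prems(1)] mult_eq by (simp add: basisF_def)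
  qed
qed

theorem mainTheorem8:
  fixes S :: "nat list \<Rightarrow> ssym" and n :: nat and v :: "nat list"
  assumes "n \<ge> 1" and "v \<in> perms n" and "is_antipode S"
  shows "S v = (\<lambda>x. \<Sum>w\<in>perms n. of_int (lam n v w) * basisF w x)"
proof
  fix x
  have "(\<Sum>w\<in>perms n. of_int (lam n v w) * basisF w x) =
      (\<Sum>w\<in>perms n. if x = w then of_int (lam n v w) else 0)"
    by (intro sum.cong) (auto simp: basisF_def)
  also have "\<dots> = S v x"
    using antipode_eq_lam[OF assms(3,1,2)] finite_perms by simp
  finally show "S v x = (\<Sum>w\<in>perms n. of_int (lam n v w) * basisF w x)" ..
qed

end
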